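(* Let $f(x)=x^TAx+a^Tx+\alpha$ with $A$ real symmetric, and $g_i(x)=x^TB_ix+b_i^Tx+\beta_i$, $i=1,\dots,m$, with each $B_i$ real symmetric positive semidefinite. Consider $(QP)$: $\inf\{f(x): g_i(x)\le0,\ i=1,\dots,m\}$. Suppose there exist $i_0$ and $\lambda\in\mathbb{R}$ with $B_{i_0}\succ0$ such that (H1) and (H2) hold, and there exists $x^0$ with $g_i(x^0)<0$ for all $i$. Let $\bar x$ be feasible for $(QP)$. Then $\bar x$ is a global minimizer of $(QP)$ if and only if there exists $\lambda=(\lambda_1,\dots,\lambda_m)\in\mathbb{R}^m_+$ such that (i) $2\big(A+\sum_{i=1}^m\lambda_iB_i\big)\bar x+\big(a+\sum_{i=1}^m\lambda_ib_i\big)=0$; (ii) $\lambda_ig_i(\bar x)=0$ for $i=1,\dots,m$; (iii) $A+\sum_{i=1}^m\lambda_iB_i\succeq 0$.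
   Context: (H1): $A+\lambda B_{i_0}\succeq 0$. (H2): there is a nonzero $v\in\mathbb{R}^n$ with $(A+\lambda B_{i_0})v=0$, $(a+\lambda b_{i_0})^Tv\le0$, $B_iv=0$ and $b_i^Tv\le0$ for all $i\ne i_0$. (The $\lambda$ in (H1),(H2) is a real scalar unrelated to the multiplier vector in the conclusion.) *)

theory Defs
  imports "HOL-Analysis.Analysis"
begin

definition quadf :: "real^'n^'n \<Rightarrow> real^'n \<Rightarrow> real \<Rightarrow> real^'n \<Rightarrow> real" where
  "quadf M c d x = x \<bullet> (M *v x) + c \<bullet> x + d"

definition symmetric_mat :: "real^'n^'n \<Rightarrow> bool" where
  "symmetric_mat M \<longleftrightarrow> transpose M = M"

definition psd :: "real^'n^'n \<Rightarrow> bool" where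
  "psd M \<longleftrightarrow> symmetric_mat M \<and> (\<forall>x. 0 \<le> x \<bullet> (M *v x))"

definition pd :: "real^'n^'n \<Rightarrow> bool" where
  "pd M \<longleftrightarrow> symmetric_mat M \<and> (\<forall>x. x \<noteq> 0 \<longrightarrow> 0 < x \<bullet> (M *v x))"

end

theory Submission
  imports Defs "HOL-Real_Asymp.Real_Asymp"
begin

text \<open>
  Under the KKT conditions the Lagrangian is a convex quadratic whose gradient vanishes at
  \<open>xbar\<close>, so it is minimal there, and on the feasible set it bounds the objective \<open>f\<close> from below.
  Conversely, \<open>f\<close> need not be convex, but \<open>h = f + \<kappa> g\<^sub>i\<^sub>0\<close> with \<open>\<kappa> = max \<mu> 0\<close> is, by (H1).
  Moving a feasible point along the direction \<open>v\<close> of (H2) keeps it feasible and does not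
  increase \<open>h\<close>, and since \<open>B i0\<close> is positive definite, constraint \<open>i0\<close> eventually becomes
  active, where \<open>h = f\<close>. Hence \<open>f xbar\<close> is also the minimum of \<open>h\<close> over the feasible set, a
  convex program with a Slater point; its Lagrange multipliers, with \<open>\<kappa>\<close> added at \<open>i0\<close>, make
  \<open>xbar\<close> a global minimiser of the Lagrangian of \<open>f\<close>, which for quadratics amounts to (i)--(iii).
\<close>

lemma affine_nonneg_on_pos_reals:
  fixes a c :: real
  assumes nonneg: "\<And>t. 0 < t \<Longrightarrow> 0 \<le> c + t * a"
  shows "0 \<le> c" and "0 \<le> a"
proof -
  have "((\<lambda>t. c + t * a) \<longlongrightarrow> c) (at_right 0)"
    by (auto intro!: tendsto_eq_intros)
  then show "0 \<le> c"
    by (rule tendsto_lowerbound) (auto intro: eventually_mono[OF eventually_at_right_less] nonneg)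
  have "((\<lambda>t. c / t + a) \<longlongrightarrow> a) at_top"
    by real_asymp
  moreover have "eventually (\<lambda>t. 0 \<le> c / t + a) at_top"
    using eventually_gt_at_top[of 0]
  proof eventually_elim
    case (elim t)
    then show ?case using nonneg[OF elim] by (simp add: field_simps)
  qed
  ultimately show "0 \<le> a"
    by (rule tendsto_lowerbound) simp
qed

lemma quadratic_nonneg_coeffs:
  fixes a b :: real
  assumes "\<And>t. 0 \<le> t * b + t\<^sup>2 * a"
  shows "b = 0" and "0 \<le> a"
proof -
  have "0 \<le> b + t * a" if "0 < t" for t
  proof -
    have "0 \<le> t * (b + t * a)"
      using assms[of t] by (simp add: power2_eq_square algebra_simps)
    then show ?thesis using that by (simp add: zero_le_mult_iff)
  qed
  note b_a_nonneg = affine_nonneg_on_pos_reals[OF this]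
  have "0 \<le> - b + t * a" if "0 < t" for t
  proof -
    have "0 \<le> t * (- b + t * a)"
      using assms[of "- t"] by (simp add: power2_eq_square algebra_simps)
    then show ?thesis using that by (simp add: zero_le_mult_iff)
  qed
  then have "0 \<le> - b" by (rule affine_nonneg_on_pos_reals)
  with b_a_nonneg show "b = 0" "0 \<le> a" by auto
qed

lemma symmetric_mat_inner_commute:
  assumes "symmetric_mat M"
  shows "(M *v x) \<bullet> y = x \<bullet> (M *v y)"
  using assms unfolding symmetric_mat_def
  by (metis inner_commute vector_transpose_matrix dot_lmul_matrix)

lemma symmetric_mat_zero: "symmetric_mat 0"
  by (simp add: symmetric_mat_def transpose_def vec_eq_iff)

lemma symmetric_mat_add: "symmetric_mat M \<Longrightarrow> symmetric_mat N \<Longrightarrow> symmetric_mat (M + N)"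
  by (simp add: symmetric_mat_def transpose_def vec_eq_iff)

lemma symmetric_mat_scaleR: "symmetric_mat M \<Longrightarrow> symmetric_mat (k *\<^sub>R M)"
  by (simp add: symmetric_mat_def transpose_scalar)

lemma symmetric_mat_sum: "(\<And>i. i \<in> S \<Longrightarrow> symmetric_mat (M i)) \<Longrightarrow> symmetric_mat (\<Sum>i\<in>S. M i)"
  by (induction S rule: infinite_finite_induct) (auto simp: symmetric_mat_zero symmetric_mat_add)

lemma psd_add: "psd M \<Longrightarrow> psd N \<Longrightarrow> psd (M + N)"
  by (simp add: psd_def symmetric_mat_add matrix_vector_mult_add_rdistrib inner_add_right add_nonneg_nonneg)

lemma psd_scaleR: "0 \<le> k \<Longrightarrow> psd M \<Longrightarrow> psd (k *\<^sub>R M)"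
  by (simp add: psd_def symmetric_mat_scaleR scaleR_matrix_vector_assoc[symmetric])

lemma quadf_add: "quadf (M + N) (c + e) (d + \<delta>) x = quadf M c d x + quadf N e \<delta> x"
  by (simp add: quadf_def matrix_vector_mult_add_rdistrib inner_add_left inner_add_right)

lemma quadf_scaleR: "quadf (k *\<^sub>R M) (k *\<^sub>R c) (k * d) x = k * quadf M c d x"
  by (simp add: quadf_def scaleR_matrix_vector_assoc[symmetric] algebra_simps)

lemma quadf_sum:
  "quadf (\<Sum>i\<in>S. M i) (\<Sum>i\<in>S. c i) (\<Sum>i\<in>S. d i) x = (\<Sum>i\<in>S. quadf (M i) (c i) (d i) x)"
  by (induction S rule: infinite_finite_induct) (simp_all add: quadf_add, simp_all add: quadf_def)

lemma quadf_lagrangian: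
  "quadf (A + (\<Sum>i\<in>S. l i *\<^sub>R B i)) (a + (\<Sum>i\<in>S. l i *\<^sub>R b i)) (\<alpha> + (\<Sum>i\<in>S. l i * \<beta> i)) x
    = quadf A a \<alpha> x + (\<Sum>i\<in>S. l i * quadf (B i) (b i) (\<beta> i) x)"
  by (simp add: quadf_add quadf_sum quadf_scaleR)

lemma quadf_add_scaleR:
  assumes "symmetric_mat M"
  shows "quadf M c d (x + t *\<^sub>R v)
    = quadf M c d x + t * ((2 *\<^sub>R (M *v x) + c) \<bullet> v) + t\<^sup>2 * (v \<bullet> (M *v v))"
  using symmetric_mat_inner_commute[OF assms, of x v]
  by (simp add: quadf_def matrix_vector_right_distrib matrix_vector_mult_scaleR
      inner_add_left inner_add_right inner_commute algebra_simps power2_eq_square)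

lemma quadf_add_scaleR_kernel:
  assumes "symmetric_mat M" "M *v v = 0"
  shows "quadf M c d (x + t *\<^sub>R v) = quadf M c d x + t * (c \<bullet> v)"
  using quadf_add_scaleR[OF assms(1)] symmetric_mat_inner_commute[OF assms(1), of x v] assms(2)
  by (simp add: inner_add_left)

lemma convex_on_quadf:
  assumes "psd M"
  shows "convex_on UNIV (quadf M c d)"
proof -
  have "quadf M c d (u *\<^sub>R x + v *\<^sub>R y) \<le> u * quadf M c d x + v * quadf M c d y"
    if "0 \<le> u" "0 \<le> v" "u + v = 1" for x y u v
  proof -
    have v: "v = 1 - u" using that by simp
    have "u * quadf M c d x + v * quadf M c d y - quadf M c d (u *\<^sub>R x + v *\<^sub>R y)
        = u * v * ((x - y) \<bullet> (M *v (x - y)))"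
      unfolding v
      by (simp add: quadf_def matrix_vector_right_distrib matrix_vector_mult_diff_distrib
          matrix_vector_mult_scaleR inner_add_left inner_add_right inner_diff_left inner_diff_right
          algebra_simps power2_eq_square)
    moreover have "0 \<le> u * v * ((x - y) \<bullet> (M *v (x - y)))"
      using assms that by (simp add: psd_def)
    ultimately show ?thesis by linarith
  qed
  then show ?thesis by (simp add: convex_on_def)
qed

lemma quadf_global_min_iff:
  assumes "symmetric_mat M"
  shows "(\<forall>x. quadf M c d y \<le> quadf M c d x) \<longleftrightarrow> 2 *\<^sub>R (M *v y) + c = 0 \<and> psd M"
    (is "?min \<longleftrightarrow> ?grad = 0 \<and> _")
proof
  assume ?min
  have "0 \<le> t * (?grad \<bullet> w) + t\<^sup>2 * (w \<bullet> (M *v w))" for t w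
    using spec[OF \<open>?min\<close>, of "y + t *\<^sub>R w"] by (simp add: quadf_add_scaleR[OF assms] add.assoc)
  note coeffs = quadratic_nonneg_coeffs[OF this]
  show "?grad = 0 \<and> psd M"
    using coeffs(1)[of ?grad] coeffs(2) assms by (simp add: psd_def)
next
  assume "?grad = 0 \<and> psd M"
  show ?min
  proof
    fix x
    have "quadf M c d x = quadf M c d y + (x - y) \<bullet> (M *v (x - y))"
      using quadf_add_scaleR[OF assms, of c d y 1 "x - y"] \<open>?grad = 0 \<and> psd M\<close> by simp
    then show "quadf M c d y \<le> quadf M c d x"
      using \<open>?grad = 0 \<and> psd M\<close> by (simp add: psd_def)
  qed
qed

lemma quadf_root_on_ray:
  assumes "pd M" "v \<noteq> 0" "quadf M c d x \<le> 0"
  obtains t where "0 \<le> t" "quadf M c d (x + t *\<^sub>R v) = 0"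
proof -
  define \<phi> where "\<phi> t = quadf M c d (x + t *\<^sub>R v)" for t
  have curvature: "0 < v \<bullet> (M *v v)"
    using assms by (simp add: pd_def)
  have \<phi>_eq: "\<phi> = (\<lambda>t. quadf M c d x + t * ((2 *\<^sub>R (M *v x) + c) \<bullet> v) + t\<^sup>2 * (v \<bullet> (M *v v)))"
    using assms(1) by (simp add: \<phi>_def fun_eq_iff pd_def quadf_add_scaleR)
  have "filterlim \<phi> at_top at_top"
    unfolding \<phi>_eq using curvature by real_asymp
  then obtain T where "0 \<le> T" "0 \<le> \<phi> T"
    by (metis (no_types, lifting) eventually_at_top_linorder filterlim_at_top nle_le)
  moreover have "\<phi> 0 \<le> 0" "continuous_on {0..T} \<phi>"
    using assms(3) by (auto simp: \<phi>_eq intro!: continuous_intros)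
  ultimately obtain t where "0 \<le> t" "\<phi> t = 0"
    using IVT'[of \<phi> 0 0 T] by auto
  then show ?thesis using that by (simp add: \<phi>_def)
qed

lemma convex_on_less_combination:
  assumes "convex_on UNIV f" "f x < s" "f y < t" "0 \<le> u" "0 \<le> v" "u + v = 1"
  shows "f (u *\<^sub>R x + v *\<^sub>R y) < u * s + v * t"
proof -
  have "f (u *\<^sub>R x + v *\<^sub>R y) \<le> u * f x + v * f y"
    using assms by (simp add: convex_on_def)
  also have "\<dots> < u * s + v * t"
    using assms by (smt (verit) mult_left_mono mult_strict_left_mono)
  finally show ?thesis .
qed

lemma convex_strict_upper_image:
  fixes h :: "'a::real_vector \<Rightarrow> real" and G :: "'m::finite \<Rightarrow> 'a \<Rightarrow> real"
  assumes "convex_on UNIV h" "\<And>i. convex_on UNIV (G i)"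
  shows "convex {(s, z :: real^'m). \<exists>x. h x < s \<and> (\<forall>i. G i x < z $ i)}" (is "convex ?S")
proof (rule convexI)
  fix q1 q2 and u v :: real
  assume "q1 \<in> ?S" "q2 \<in> ?S" and uv: "0 \<le> u" "0 \<le> v" "u + v = 1"
  then obtain x1 x2 where "h x1 < fst q1" "\<forall>i. G i x1 < snd q1 $ i" "h x2 < fst q2" "\<forall>i. G i x2 < snd q2 $ i"
    by auto
  then have "h (u *\<^sub>R x1 + v *\<^sub>R x2) < fst (u *\<^sub>R q1 + v *\<^sub>R q2)"
    and "\<forall>i. G i (u *\<^sub>R x1 + v *\<^sub>R x2) < snd (u *\<^sub>R q1 + v *\<^sub>R q2) $ i"
    using assms uv by (simp_all add: convex_on_less_combination)
  then show "u *\<^sub>R q1 + v *\<^sub>R q2 \<in> ?S"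
    unfolding mem_Collect_eq case_prod_unfold by blast
qed

lemma strict_upper_image_functional_nonneg:
  fixes F :: "'a \<Rightarrow> real" and G :: "'m::finite \<Rightarrow> 'a \<Rightarrow> real"
  assumes sep: "\<And>x s z. F x < s \<Longrightarrow> \<forall>i. G i x < z $ i \<Longrightarrow> 0 \<le> c * s + w \<bullet> z"
  shows "0 \<le> c" and "0 \<le> w $ k" and "0 \<le> c * F x + (\<Sum>i\<in>UNIV. w $ i * G i x)"
proof -
  \<comment> \<open>The admissible \<open>(s, z)\<close> form an upward closed set: pushing a point of it to infinity
    along a coordinate gives the signs, shrinking it towards \<open>(F x, G x)\<close> gives the bound.\<close>
  define s0 where "s0 = F x + 1"
  define z0 :: "real^'m" where "z0 = (\<chi> i. G i x + 1)"
  have "0 \<le> (c * s0 + w \<bullet> z0) + t * c" if "0 < t" for t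
    using sep[of x "s0 + t" z0] that by (simp add: s0_def z0_def algebra_simps)
  then show "0 \<le> c" by (rule affine_nonneg_on_pos_reals)
  have "0 \<le> (c * s0 + w \<bullet> z0) + t * w $ k" if "0 < t" for t
  proof -
    have "\<forall>i. G i x < (z0 + axis k t) $ i"
      using that by (simp add: z0_def axis_def)
    then have "0 \<le> c * s0 + w \<bullet> (z0 + axis k t)"
      by (intro sep[of x]) (simp add: s0_def)
    then show ?thesis
      by (simp add: inner_add_right inner_axis algebra_simps)
  qed
  then show "0 \<le> w $ k" by (rule affine_nonneg_on_pos_reals)
  have "0 \<le> (c * F x + (\<Sum>i\<in>UNIV. w $ i * G i x)) + t * (c + (\<Sum>i\<in>UNIV. w $ i))" if "0 < t" for t
    using sep[of x "F x + t" "\<chi> i. G i x + t"] that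
    by (simp add: inner_vec_def sum.distrib algebra_simps flip: sum_distrib_left)
  then show "0 \<le> c * F x + (\<Sum>i\<in>UNIV. w $ i * G i x)"
    by (rule affine_nonneg_on_pos_reals)
qed

lemma fritz_john_multipliers:
  fixes h :: "'a::real_vector \<Rightarrow> real" and G :: "'m::finite \<Rightarrow> 'a \<Rightarrow> real"
  assumes convex_h: "convex_on UNIV h" and convex_G: "\<And>i. convex_on UNIV (G i)"
    and lower: "\<And>x. \<forall>i. G i x \<le> 0 \<Longrightarrow> p \<le> h x"
  obtains c w where "0 \<le> c" "\<forall>i. 0 \<le> w i" "c \<noteq> 0 \<or> (\<exists>i. w i \<noteq> 0)"
    "\<forall>x. 0 \<le> c * (h x - p) + (\<Sum>i\<in>UNIV. w i * G i x)"
proof -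
  define S where "S = {(s, z :: real^'m). \<exists>x. h x - p < s \<and> (\<forall>i. G i x < z $ i)}"
  have "convex_on UNIV (\<lambda>x. h x - p)"
    using convex_on_add[OF convex_h, of "\<lambda>_. - p"] by (simp add: convex_on_const)
  then have "convex S"
    unfolding S_def using convex_G by (rule convex_strict_upper_image)
  moreover have "0 \<notin> S"
  proof
    assume "0 \<in> S"
    then obtain x where "h x - p < 0" "\<forall>i. G i x < 0"
      by (auto simp: S_def zero_prod_def)
    then show False
      using lower[of x] by (simp add: less_imp_le)
  qed
  ultimately obtain a where "a \<noteq> 0" and a: "\<forall>q\<in>S. 0 \<le> inner a q"
    using separating_hyperplane_set_0 by blast
  define c where "c = fst a"
  define w where "w = snd a"
  have sep: "0 \<le> c * s + w \<bullet> z" if "h x - p < s" "\<forall>i. G i x < z $ i" for x s z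
  proof -
    have "(s, z) \<in> S" unfolding S_def using that by blast
    then show ?thesis using a by (force simp: c_def w_def inner_prod_def)
  qed
  have nonneg: "0 \<le> c" "0 \<le> w $ k" "0 \<le> c * (h x - p) + (\<Sum>i\<in>UNIV. w $ i * G i x)" for k x
    using strict_upper_image_functional_nonneg[of "\<lambda>x. h x - p" G c w] sep by blast+
  have "c \<noteq> 0 \<or> (\<exists>i. w $ i \<noteq> 0)"
    using \<open>a \<noteq> 0\<close> by (auto simp: c_def w_def vec_eq_iff prod_eq_iff)
  then show ?thesis
    using that[of c "\<lambda>i. w $ i"] nonneg by blast
qed

lemma slater_lagrange_multipliers:
  fixes h :: "'a::real_vector \<Rightarrow> real" and G :: "'m::finite \<Rightarrow> 'a \<Rightarrow> real"
  assumes convex_h: "convex_on UNIV h" and convex_G: "\<And>i. convex_on UNIV (G i)"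
    and slater: "\<forall>i. G i x0 < 0"
    and lower: "\<And>x. \<forall>i. G i x \<le> 0 \<Longrightarrow> p \<le> h x"
  obtains \<nu> where "\<forall>i. 0 \<le> \<nu> i" "\<forall>x. p \<le> h x + (\<Sum>i\<in>UNIV. \<nu> i * G i x)"
proof -
  obtain c w where "0 \<le> c" and w: "\<forall>i. 0 \<le> w i" and nontrivial: "c \<noteq> 0 \<or> (\<exists>i. w i \<noteq> 0)"
    and fj: "\<forall>x. 0 \<le> c * (h x - p) + (\<Sum>i\<in>UNIV. w i * G i x)"
    by (rule fritz_john_multipliers[OF convex_h convex_G lower])
  have "c \<noteq> 0"
  proof
    assume "c = 0"
    with nontrivial obtain k where "w k \<noteq> 0" by blast
    have "(\<Sum>i\<in>UNIV. w i * G i x0) < (\<Sum>i\<in>(UNIV :: 'm set). 0)"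
    proof (rule sum_strict_mono_ex1)
      show "\<forall>i\<in>UNIV. w i * G i x0 \<le> 0"
        using w slater by (simp add: mult_nonneg_nonpos less_imp_le)
      show "\<exists>i\<in>UNIV. w i * G i x0 < 0"
        using w slater \<open>w k \<noteq> 0\<close> by (metis UNIV_I less_le mult_pos_neg)
    qed simp
    with fj \<open>c = 0\<close> show False by (metis add_0 mult_zero_left not_le sum.neutral_const)
  qed
  with \<open>0 \<le> c\<close> have "0 < c" by simp
  show ?thesis
  proof
    show "\<forall>i. 0 \<le> w i / c" using w \<open>0 < c\<close> by simp
    show "\<forall>x. p \<le> h x + (\<Sum>i\<in>UNIV. w i / c * G i x)"
      using fj \<open>0 < c\<close> by (simp add: field_simps sum_divide_distrib[symmetric])
  qed
qed

lemma weak_duality: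
  fixes f :: "'a \<Rightarrow> real" and G :: "'m \<Rightarrow> 'a \<Rightarrow> real"
  assumes "\<forall>i. 0 \<le> l i" "\<forall>x. f xbar \<le> f x + (\<Sum>i\<in>UNIV. l i * G i x)"
  shows "\<forall>x. (\<forall>i. G i x \<le> 0) \<longrightarrow> f xbar \<le> f x"
proof (intro allI impI)
  fix x
  assume "\<forall>i. G i x \<le> 0"
  with assms(1) have "(\<Sum>i\<in>UNIV. l i * G i x) \<le> 0"
    by (intro sum_nonpos) (simp add: mult_nonneg_nonpos)
  with assms(2)[rule_format, of x] show "f xbar \<le> f x"
    by linarith
qed

lemma kkt_iff_lagrangian_bound:
  fixes A :: "real^'n^'n" and B :: "'m::finite \<Rightarrow> real^'n^'n"
  assumes symA: "symmetric_mat A" and symB: "\<And>i. symmetric_mat (B i)"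
    and feas: "\<forall>i. quadf (B i) (b i) (\<beta> i) xbar \<le> 0" and l: "\<forall>i. 0 \<le> l i"
  shows "2 *\<^sub>R ((A + (\<Sum>i\<in>UNIV. l i *\<^sub>R B i)) *v xbar) + (a + (\<Sum>i\<in>UNIV. l i *\<^sub>R b i)) = 0
          \<and> (\<forall>i. l i * quadf (B i) (b i) (\<beta> i) xbar = 0)
          \<and> psd (A + (\<Sum>i\<in>UNIV. l i *\<^sub>R B i))
    \<longleftrightarrow> (\<forall>x. quadf A a \<alpha> xbar \<le> quadf A a \<alpha> x + (\<Sum>i\<in>UNIV. l i * quadf (B i) (b i) (\<beta> i) x))"
    (is "?grad \<and> ?slack \<and> ?psd \<longleftrightarrow> ?bound")
proof -
  let ?L = "quadf (A + (\<Sum>i\<in>UNIV. l i *\<^sub>R B i)) (a + (\<Sum>i\<in>UNIV. l i *\<^sub>R b i)) (\<alpha> + (\<Sum>i\<in>UNIV. l i * \<beta> i))"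
  have "symmetric_mat (A + (\<Sum>i\<in>UNIV. l i *\<^sub>R B i))"
    by (simp add: symA symB symmetric_mat_add symmetric_mat_scaleR symmetric_mat_sum)
  note min_iff = quadf_global_min_iff[OF this]
  have slack_nonpos: "l i * quadf (B i) (b i) (\<beta> i) xbar \<le> 0" for i
    using l feas by (simp add: mult_nonneg_nonpos)
  show ?thesis
  proof
    assume kkt: "?grad \<and> ?slack \<and> ?psd"
    then have "\<forall>x. ?L xbar \<le> ?L x"
      using min_iff by blast
    moreover have "(\<Sum>i\<in>UNIV. l i * quadf (B i) (b i) (\<beta> i) xbar) = 0"
      using kkt by (intro sum.neutral) blast
    ultimately show ?bound
      by (simp add: quadf_lagrangian)
  next
    assume ?bound
    from spec[OF this, of xbar]
    have "(\<Sum>i\<in>UNIV. 0) \<le> (\<Sum>i\<in>UNIV. l i * quadf (B i) (b i) (\<beta> i) xbar)"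
      by simp
    then have slack_sum: "(\<Sum>i\<in>UNIV. l i * quadf (B i) (b i) (\<beta> i) xbar) = (\<Sum>i\<in>(UNIV :: 'm set). 0)"
      using slack_nonpos by (simp add: antisym sum_nonpos)
    have ?slack
    proof
      fix i
      show "l i * quadf (B i) (b i) (\<beta> i) xbar = 0"
        using sum_mono_inv[OF slack_sum, where i = i] slack_nonpos by simp
    qed
    moreover have "\<forall>x. ?L xbar \<le> ?L x"
      using slack_sum \<open>?bound\<close> by (simp add: quadf_lagrangian)
    ultimately show "?grad \<and> ?slack \<and> ?psd"
      using min_iff by blast
  qed
qed

lemma feasible_point_on_active_constraint:
  fixes B :: "'m \<Rightarrow> real^'n^'n"
  assumes symM: "symmetric_mat M" and kerM: "M *v v = 0" and descent: "c \<bullet> v \<le> 0"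
    and symB: "\<And>i. symmetric_mat (B i)" and pdB0: "pd (B i0)" and "v \<noteq> 0"
    and recession: "\<forall>i. i \<noteq> i0 \<longrightarrow> B i *v v = 0 \<and> b i \<bullet> v \<le> 0"
    and feas: "\<forall>i. quadf (B i) (b i) (\<beta> i) x \<le> 0"
  obtains y where "\<forall>i. quadf (B i) (b i) (\<beta> i) y \<le> 0" "quadf (B i0) (b i0) (\<beta> i0) y = 0"
    "quadf M c d y \<le> quadf M c d x"
proof -
  obtain t where "0 \<le> t" and active: "quadf (B i0) (b i0) (\<beta> i0) (x + t *\<^sub>R v) = 0"
    using quadf_root_on_ray[OF pdB0 \<open>v \<noteq> 0\<close>] feas by blast
  have "quadf (B i) (b i) (\<beta> i) (x + t *\<^sub>R v) \<le> 0" for i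
  proof (cases "i = i0")
    case False
    then have "quadf (B i) (b i) (\<beta> i) (x + t *\<^sub>R v) = quadf (B i) (b i) (\<beta> i) x + t * (b i \<bullet> v)"
        and "b i \<bullet> v \<le> 0"
      using recession quadf_add_scaleR_kernel[OF symB] by auto
    with feas \<open>0 \<le> t\<close> show ?thesis
      by (metis add_nonpos_nonpos mult_nonneg_nonpos)
  qed (use active in simp)
  moreover have "quadf M c d (x + t *\<^sub>R v) \<le> quadf M c d x"
    using quadf_add_scaleR_kernel[OF symM kerM] descent \<open>0 \<le> t\<close> by (simp add: mult_nonneg_nonpos)
  ultimately show ?thesis using that active by blast
qed

lemma strong_duality_hidden_convexity:
  fixes A :: "real^'n^'n" and B :: "'m::finite \<Rightarrow> real^'n^'n"
  assumes psdB: "\<And>i. psd (B i)" and pdB0: "pd (B i0)"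
    and H1: "psd (A + \<mu> *\<^sub>R B i0)"
    and "v \<noteq> 0" and kernel: "(A + \<mu> *\<^sub>R B i0) *v v = 0" and descent: "(a + \<mu> *\<^sub>R b i0) \<bullet> v \<le> 0"
    and recession: "\<forall>i. i \<noteq> i0 \<longrightarrow> B i *v v = 0 \<and> b i \<bullet> v \<le> 0"
    and slater: "\<forall>i. quadf (B i) (b i) (\<beta> i) x0 < 0"
    and opt: "\<forall>x. (\<forall>i. quadf (B i) (b i) (\<beta> i) x \<le> 0) \<longrightarrow> quadf A a \<alpha> xbar \<le> quadf A a \<alpha> x"
  obtains l where "\<forall>i. 0 \<le> l i"
    "\<forall>x. quadf A a \<alpha> xbar \<le> quadf A a \<alpha> x + (\<Sum>i\<in>UNIV. l i * quadf (B i) (b i) (\<beta> i) x)"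
proof -
  define f where "f = quadf A a \<alpha>"
  define g where "g i = quadf (B i) (b i) (\<beta> i)" for i
  define \<kappa> where "\<kappa> = max \<mu> 0"
  define h where "h = quadf (A + \<kappa> *\<^sub>R B i0) (a + \<kappa> *\<^sub>R b i0) (\<alpha> + \<kappa> * \<beta> i0)"
  have h_eq: "h x = f x + \<kappa> * g i0 x" for x
    by (simp add: h_def f_def g_def quadf_add quadf_scaleR)
  have symB: "symmetric_mat (B i)" for i
    using psdB by (simp add: psd_def)
  have "psd (A + \<kappa> *\<^sub>R B i0)"
  proof (cases "0 \<le> \<mu>")
    case False
    then have "A + \<kappa> *\<^sub>R B i0 = (A + \<mu> *\<^sub>R B i0) + (- \<mu>) *\<^sub>R B i0"
      by (simp add: \<kappa>_def algebra_simps)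
    with False show ?thesis
      using psd_add[OF H1 psd_scaleR[OF _ psdB]] by (metis neg_0_le_iff_le nle_le)
  qed (use H1 in \<open>simp add: \<kappa>_def\<close>)
  then have "convex_on UNIV h"
    unfolding h_def by (rule convex_on_quadf)
  moreover have "convex_on UNIV (g i)" for i
    unfolding g_def using psdB by (rule convex_on_quadf)
  moreover have "f xbar \<le> h x" if feas: "\<forall>i. g i x \<le> 0" for x
  proof (cases "0 < \<mu>")
    case False
    then show ?thesis using opt feas by (simp add: h_eq \<kappa>_def f_def g_def)
  next
    case True
    obtain y where "\<forall>i. g i y \<le> 0" "g i0 y = 0" "h y \<le> h x"
      using feasible_point_on_active_constraint[of "A + \<mu> *\<^sub>R B i0" v "a + \<mu> *\<^sub>R b i0" B i0 b \<beta> x]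
        H1 kernel descent symB pdB0 \<open>v \<noteq> 0\<close> recession feas True
      by (auto simp: psd_def g_def h_def \<kappa>_def)
    then show ?thesis
      using opt[rule_format, of y] by (simp add: h_eq f_def g_def)
  qed
  ultimately obtain \<nu> where \<nu>: "\<forall>i. 0 \<le> \<nu> i" "\<forall>x. f xbar \<le> h x + (\<Sum>i\<in>UNIV. \<nu> i * g i x)"
    using slater_lagrange_multipliers[of h g x0 "f xbar"] slater by (auto simp: g_def)
  define l where "l i = \<nu> i + (if i = i0 then \<kappa> else 0)" for i
  have "l i * g i x = \<nu> i * g i x + (if i = i0 then \<kappa> * g i x else 0)" for i x
    by (simp add: l_def distrib_right)
  then have "(\<Sum>i\<in>UNIV. l i * g i x) = (\<Sum>i\<in>UNIV. \<nu> i * g i x) + \<kappa> * g i0 x" for x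
    by (simp add: sum.distrib)
  then have "f xbar \<le> f x + (\<Sum>i\<in>UNIV. l i * g i x)" for x
    using \<nu>(2) by (simp add: h_eq algebra_simps)
  moreover have "\<forall>i. 0 \<le> l i"
    using \<nu>(1) by (simp add: l_def \<kappa>_def)
  ultimately show ?thesis
    using that unfolding f_def g_def by blast
qed

theorem proposition5p2:
  fixes A :: "real^'n^'n" and a :: "real^'n" and \<alpha> :: real
    and B :: "'m::finite \<Rightarrow> real^'n^'n" and b :: "'m \<Rightarrow> real^'n" and \<beta> :: "'m \<Rightarrow> real"
    and i0 :: 'm and \<mu> :: real and xbar :: "real^'n"
  assumes symA: "symmetric_mat A"
    and psdB: "\<And>i. psd (B i)"
    and pdB0: "pd (B i0)"
    and H1: "psd (A + \<mu> *\<^sub>R B i0)"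
    and H2: "\<exists>v. v \<noteq> 0 \<and> (A + \<mu> *\<^sub>R B i0) *v v = 0 \<and> (a + \<mu> *\<^sub>R b i0) \<bullet> v \<le> 0
               \<and> (\<forall>i. i \<noteq> i0 \<longrightarrow> B i *v v = 0 \<and> b i \<bullet> v \<le> 0)"
    and slater: "\<exists>x0. \<forall>i. quadf (B i) (b i) (\<beta> i) x0 < 0"
    and feas: "\<forall>i. quadf (B i) (b i) (\<beta> i) xbar \<le> 0"
  shows "(\<forall>x. (\<forall>i. quadf (B i) (b i) (\<beta> i) x \<le> 0) \<longrightarrow> quadf A a \<alpha> xbar \<le> quadf A a \<alpha> x)
    \<longleftrightarrow> (\<exists>l :: 'm \<Rightarrow> real. (\<forall>i. 0 \<le> l i)
          \<and> 2 *\<^sub>R ((A + (\<Sum>i\<in>UNIV. l i *\<^sub>R B i)) *v xbar) + (a + (\<Sum>i\<in>UNIV. l i *\<^sub>R b i)) = 0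
          \<and> (\<forall>i. l i * quadf (B i) (b i) (\<beta> i) xbar = 0)
          \<and> psd (A + (\<Sum>i\<in>UNIV. l i *\<^sub>R B i)))"
    (is "?opt \<longleftrightarrow> _")
proof -
  have symB: "symmetric_mat (B i)" for i
    using psdB by (simp add: psd_def)
  have "?opt \<longleftrightarrow> (\<exists>l. (\<forall>i. 0 \<le> l i) \<and>
      (\<forall>x. quadf A a \<alpha> xbar \<le> quadf A a \<alpha> x + (\<Sum>i\<in>UNIV. l i * quadf (B i) (b i) (\<beta> i) x)))"
    (is "_ \<longleftrightarrow> ?multipliers")
  proof
    assume ?opt
    obtain v where v: "v \<noteq> 0" "(A + \<mu> *\<^sub>R B i0) *v v = 0" "(a + \<mu> *\<^sub>R b i0) \<bullet> v \<le> 0"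
      "\<forall>i. i \<noteq> i0 \<longrightarrow> B i *v v = 0 \<and> b i \<bullet> v \<le> 0"
      using H2 by blast
    obtain x0 where x0: "\<forall>i. quadf (B i) (b i) (\<beta> i) x0 < 0"
      using slater by blast
    obtain l where "\<forall>i. 0 \<le> l i"
      "\<forall>x. quadf A a \<alpha> xbar \<le> quadf A a \<alpha> x + (\<Sum>i\<in>UNIV. l i * quadf (B i) (b i) (\<beta> i) x)"
      by (rule strong_duality_hidden_convexity[where B = B and \<mu> = \<mu>, OF psdB pdB0 H1 v x0 \<open>?opt\<close>])
    then show ?multipliers by blast
  next
    assume ?multipliers
    then show ?opt
      by (elim exE conjE) (rule weak_duality)
  qed
  then show ?thesis
    using kkt_iff_lagrangian_bound[OF symA symB feas] by blast
qed

end
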